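(* Let $h:\mathbb{R}^p\to\mathbb{R}$ be a $\gamma$-strongly concave function with $\gamma>0$ whose gradient is Lipschitz continuous with constant $M>0$. Let $c\ge0$ and let $\varphi:\mathbb{R}^p\to\mathbb{R}^p$ be a mapping with $\|\varphi(\mathbf{z})\|\le c$ for all $\mathbf{z}\in\mathbb{R}^p$. For $\mathbf{z}\in\mathbb{R}^p$ and $\beta\in(0,\frac{\gamma}{8M^2}]$ define $\mathbf{y}=\mathbf{z}+\beta(\nabla h(\mathbf{z})+\varphi(\mathbf{z}))$. Then there is a compact set $V\subset\mathbb{R}^p$, depending on $c$ and $h$ but not on $\beta$, such that $$\|\mathbf{y}\|\le\|\mathbf{z}\|\ \text{ if }\mathbf{z}\notin V,\qquad \|\mathbf{y}\|\le R\ \text{ if }\mathbf{z}\in V,$$ where $R=\max_{\mathbf{v}\in V}\{\|\mathbf{v}\|+\frac{\gamma}{8M^2}\|\nabla h(\mathbf{v})\|\}+\frac{\gamma c}{8M^2}$. *)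

theory Defs
  imports "HOL-Analysis.Analysis"
begin

definition strongly_concave :: "real \<Rightarrow> ('a::real_normed_vector \<Rightarrow> real) \<Rightarrow> bool" where
  "strongly_concave \<gamma> h \<longleftrightarrow>
     (\<forall>x y. \<forall>t::real. 0 \<le> t \<and> t \<le> 1 \<longrightarrow>
        h (t *\<^sub>R x + (1 - t) *\<^sub>R y) \<ge>
          t * h x + (1 - t) * h y + \<gamma> / 2 * t * (1 - t) * (norm (x - y))\<^sup>2)"

end

theory Submission
  imports Defs
begin

text \<open>Strong concavity makes the gradient strongly monotone, so the drift \<open>\<nabla>h(z)\<close> points
  inwards with strength \<open>\<gamma>\<parallel>z\<parallel>\<^sup>2\<close>, while the Lipschitz bound keeps the step length linear
  in \<open>\<parallel>z\<parallel>\<close>. For step sizes \<open>\<beta> \<le> \<gamma>/(8M\<^sup>2)\<close> the quadratic term \<open>\<beta>\<parallel>\<nabla>h(z) + \<phi>(z)\<parallel>\<^sup>2\<close> in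
  \<open>\<parallel>z + \<beta>(\<nabla>h(z) + \<phi>(z))\<parallel>\<^sup>2\<close> is then dominated by the inward drift outside a ball whose
  radius depends only on \<open>\<gamma>\<close>, \<open>M\<close>, \<open>c\<close> and \<open>\<nabla>h(0)\<close>; that ball is \<open>V\<close>. Inside \<open>V\<close> the
  bound is just the triangle inequality.\<close>

lemma has_field_derivative_ge_right_limit:
  fixes g L :: "real \<Rightarrow> real"
  assumes "(g has_field_derivative D) (at 0)" and "(L \<longlongrightarrow> l) (at_right 0)"
    and "\<forall>\<^sub>F t in at_right 0. L t \<le> (g t - g 0) / t"
  shows "l \<le> D"
proof -
  have "((\<lambda>t. (g (0 + t) - g 0) / t) \<longlongrightarrow> D) (at 0)"
    using assms(1) by (simp add: DERIV_def)
  then have "((\<lambda>t. (g t - g 0) / t) \<longlongrightarrow> D) (at_right 0)"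
    by (simp add: filterlim_at_split)
  from tendsto_le[OF _ this assms(2,3)] show ?thesis
    by simp
qed

lemma strongly_concave_gradient_ineq:
  fixes h :: "'a::real_inner \<Rightarrow> real"
  assumes sc: "strongly_concave \<gamma> h" and "GDERIV h y :> d"
  shows "h x \<le> h y + d \<bullet> (x - y) - \<gamma> / 2 * (norm (x - y))\<^sup>2"
proof -
  define g where "g t = h (y + t *\<^sub>R (x - y))" for t
  define L where "L t = h x - h y + \<gamma> / 2 * (1 - t) * (norm (x - y))\<^sup>2" for t
  have "((\<lambda>t. y + t *\<^sub>R (x - y)) has_derivative (\<lambda>t. t *\<^sub>R (x - y))) (at 0)"
    by (auto intro!: derivative_eq_intros)
  moreover have "(h has_derivative (\<lambda>v. v \<bullet> d)) (at (y + 0 *\<^sub>R (x - y)))"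
    using assms(2) by (simp add: gderiv_def)
  ultimately have "(g has_derivative (\<lambda>t. (t *\<^sub>R (x - y)) \<bullet> d)) (at 0)"
    unfolding g_def by (rule has_derivative_compose)
  then have g': "(g has_field_derivative d \<bullet> (x - y)) (at 0)"
    unfolding has_field_derivative_def by (simp add: mult.commute[of _ "d \<bullet> (x - y)"] inner_commute)
  have "(L \<longlongrightarrow> L 0) (at_right 0)"
    unfolding L_def by (intro tendsto_intros)
  moreover have "\<forall>\<^sub>F t in at_right 0. L t \<le> (g t - g 0) / t"
    using eventually_at_right_real[OF zero_less_one]
  proof eventually_elim
    case (elim t)
    have "t * h x + (1 - t) * h y + \<gamma> / 2 * t * (1 - t) * (norm (x - y))\<^sup>2
        \<le> h (t *\<^sub>R x + (1 - t) *\<^sub>R y)"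
      using sc elim unfolding strongly_concave_def by simp
    moreover have "t *\<^sub>R x + (1 - t) *\<^sub>R y = y + t *\<^sub>R (x - y)"
      by (simp add: algebra_simps)
    ultimately have "t * L t \<le> g t - g 0"
      unfolding g_def L_def by (simp add: algebra_simps)
    then show ?case
      using elim by (simp add: field_simps)
  qed
  ultimately have "L 0 \<le> d \<bullet> (x - y)"
    by (rule has_field_derivative_ge_right_limit[OF g'])
  then show ?thesis
    by (simp add: L_def)
qed

lemma strongly_concave_gradient_monotone:
  fixes h :: "'a::real_inner \<Rightarrow> real"
  assumes "strongly_concave \<gamma> h" and "\<And>u. GDERIV h u :> gradh u"
  shows "(gradh x - gradh y) \<bullet> (x - y) \<le> - \<gamma> * (norm (x - y))\<^sup>2"
proof -
  have "h x \<le> h y + gradh y \<bullet> (x - y) - \<gamma> / 2 * (norm (x - y))\<^sup>2"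
    by (rule strongly_concave_gradient_ineq[OF assms(1) assms(2)])
  moreover have "h y \<le> h x + gradh x \<bullet> (y - x) - \<gamma> / 2 * (norm (y - x))\<^sup>2"
    by (rule strongly_concave_gradient_ineq[OF assms(1) assms(2)])
  ultimately show ?thesis
    by (simp add: norm_minus_commute inner_diff_left inner_diff_right inner_commute algebra_simps)
qed

lemma norm_add_scaleR_le_norm:
  fixes z w :: "'a::real_inner"
  assumes "0 \<le> \<beta>" and "2 * (z \<bullet> w) + \<beta> * (norm w)\<^sup>2 \<le> 0"
  shows "norm (z + \<beta> *\<^sub>R w) \<le> norm z"
proof (rule power2_le_imp_le)
  have "(norm (z + \<beta> *\<^sub>R w))\<^sup>2 = (norm z)\<^sup>2 + \<beta> * (2 * (z \<bullet> w) + \<beta> * (norm w)\<^sup>2)"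
    unfolding power2_norm_eq_inner inner_add_left inner_add_right inner_scaleR_left inner_scaleR_right
    by (simp add: inner_commute[of w z] algebra_simps)
  also have "\<dots> \<le> (norm z)\<^sup>2"
    using assms by (simp add: mult_nonneg_nonpos)
  finally show "(norm (z + \<beta> *\<^sub>R w))\<^sup>2 \<le> (norm z)\<^sup>2" .
qed simp

lemma norm_add_scaleR_sum_le:
  fixes z g v :: "'a::real_normed_vector"
  assumes "0 \<le> \<beta>" and "\<beta> \<le> k" and "norm v \<le> c"
  shows "norm (z + \<beta> *\<^sub>R (g + v)) \<le> norm z + k * norm g + k * c"
proof -
  have "norm (z + \<beta> *\<^sub>R (g + v)) \<le> norm z + \<beta> * norm (g + v)"
    using norm_triangle_ineq[of z "\<beta> *\<^sub>R (g + v)"] assms(1) by simp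
  also have "\<dots> \<le> norm z + \<beta> * (norm g + norm v)"
    using assms(1) by (intro add_left_mono mult_left_mono norm_triangle_ineq)
  also have "\<dots> \<le> norm z + k * (norm g + c)"
    using assms by (intro add_left_mono mult_mono) auto
  finally show ?thesis
    by (simp add: algebra_simps)
qed

text \<open>The scalar core of the contraction: \<open>p\<close> bounds the drift \<open>z \<bullet> w\<close> and \<open>s\<close> the step
  length \<open>\<parallel>w\<parallel>\<close> at a point of norm \<open>r\<close>.\<close>

lemma drift_dominates_step:
  fixes a r s p \<beta> \<gamma> M :: real
  assumes "0 \<le> a" "0 < \<gamma>" "0 < M" "0 \<le> \<beta>" "\<beta> \<le> \<gamma> / (8 * M\<^sup>2)"
    and "2 * a \<le> \<gamma> * r" "a \<le> M * r"
    and "0 \<le> s" "s \<le> a + M * r" "p \<le> a * r - \<gamma> * r\<^sup>2"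
  shows "2 * p + \<beta> * s\<^sup>2 \<le> 0"
proof -
  have "0 \<le> M * r"
    using assms(1,7) by linarith
  then have r: "0 \<le> r"
    using assms(3) by (simp add: zero_le_mult_iff)
  have "s\<^sup>2 \<le> (a + M * r)\<^sup>2"
    using assms(8,9) by (simp add: power_mono)
  also have "\<dots> \<le> 2 * a\<^sup>2 + 2 * (M * r)\<^sup>2"
    using sum_squares_ge_zero[of "a - M * r" 0] by (simp add: power2_eq_square algebra_simps)
  also have "\<dots> \<le> 4 * (M * r)\<^sup>2"
    using assms(1,7) by (simp add: power_mono)
  finally have "\<beta> * s\<^sup>2 \<le> \<gamma> / (8 * M\<^sup>2) * (4 * (M * r)\<^sup>2)"
    using assms(4,5) by (intro mult_mono) auto
  also have "\<dots> = \<gamma> * r\<^sup>2 / 2"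
    using assms(3) by (simp add: power_mult_distrib)
  finally have "\<beta> * s\<^sup>2 \<le> \<gamma> * r\<^sup>2 / 2" .
  moreover have "2 * a * r \<le> \<gamma> * r\<^sup>2"
    using mult_right_mono[OF assms(6) r] by (simp add: power2_eq_square algebra_simps)
  moreover have "0 \<le> \<gamma> * r\<^sup>2"
    using assms(2) by simp
  ultimately show ?thesis
    using assms(10) by linarith
qed

lemma strongly_concave_gradient_step_norm_le:
  fixes h :: "'a::real_inner \<Rightarrow> real"
  assumes "0 < \<gamma>" and "0 < M" and sc: "strongly_concave \<gamma> h"
    and deriv: "\<And>x. GDERIV h x :> gradh x" and lip: "M-lipschitz_on UNIV gradh"
    and v: "norm v \<le> c" and "0 \<le> \<beta>" and "\<beta> \<le> \<gamma> / (8 * M\<^sup>2)"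
    and far: "2 * (norm (gradh 0) + c) / \<gamma> + (norm (gradh 0) + c) / M \<le> norm z"
  shows "norm (z + \<beta> *\<^sub>R (gradh z + v)) \<le> norm z"
proof (rule norm_add_scaleR_le_norm[OF \<open>0 \<le> \<beta>\<close>])
  define a where "a = norm (gradh 0) + c"
  let ?r = "norm z"
  have "0 \<le> c"
    using v norm_ge_zero order_trans by blast
  then have a: "0 \<le> a"
    by (simp add: a_def)
  then have "0 \<le> 2 * a / \<gamma>" "0 \<le> a / M"
    using \<open>0 < \<gamma>\<close> \<open>0 < M\<close> by simp_all
  then have "2 * a / \<gamma> \<le> ?r" "a / M \<le> ?r"
    using far unfolding a_def[symmetric] by linarith+
  then have "2 * a \<le> \<gamma> * ?r" "a \<le> M * ?r"
    using \<open>0 < \<gamma>\<close> \<open>0 < M\<close> by (simp_all add: pos_divide_le_eq mult.commute)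
  moreover have "norm (gradh z + v) \<le> a + M * ?r"
  proof -
    have "norm (gradh z - gradh 0) \<le> M * ?r"
      using lipschitz_onD[OF lip, of z 0] by (simp add: dist_norm)
    then show ?thesis
      using norm_triangle_ineq2[of "gradh z" "gradh 0"] norm_triangle_ineq[of "gradh z" v] v a_def
      by linarith
  qed
  moreover have "z \<bullet> (gradh z + v) \<le> a * ?r - \<gamma> * ?r\<^sup>2"
  proof -
    have "gradh z \<bullet> z \<le> gradh 0 \<bullet> z - \<gamma> * ?r\<^sup>2"
      using strongly_concave_gradient_monotone[OF sc deriv, of z 0] by (simp add: inner_diff_left)
    moreover have "gradh 0 \<bullet> z \<le> norm (gradh 0) * ?r"
      by (rule norm_cauchy_schwarz)
    moreover have "v \<bullet> z \<le> c * ?r"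
      using norm_cauchy_schwarz[of v z] mult_right_mono[OF v norm_ge_zero[of z]] by linarith
    moreover have "z \<bullet> (gradh z + v) = gradh z \<bullet> z + v \<bullet> z"
      by (simp add: inner_add_right inner_commute)
    moreover have "a * ?r = norm (gradh 0) * ?r + c * ?r"
      by (simp add: a_def distrib_right)
    ultimately show ?thesis
      by linarith
  qed
  ultimately show "2 * (z \<bullet> (gradh z + v)) + \<beta> * (norm (gradh z + v))\<^sup>2 \<le> 0"
    using drift_dominates_step[OF a \<open>0 < \<gamma>\<close> \<open>0 < M\<close> \<open>0 \<le> \<beta>\<close> \<open>\<beta> \<le> _\<close>] by simp
qed

theorem lemma1:
  fixes h :: "real ^ 'p \<Rightarrow> real" and gradh :: "real ^ 'p \<Rightarrow> real ^ 'p"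
    and \<gamma> M c :: real
  assumes "\<gamma> > 0" and "M > 0" and "c \<ge> 0"
    and "strongly_concave \<gamma> h"
    and "\<And>x. GDERIV h x :> gradh x"
    and "M-lipschitz_on UNIV gradh"
  shows "\<exists>V::(real ^ 'p) set. compact V \<and>
    (\<forall>\<phi> :: real ^ 'p \<Rightarrow> real ^ 'p. (\<forall>z. norm (\<phi> z) \<le> c) \<longrightarrow>
      (\<forall>\<beta>. 0 < \<beta> \<and> \<beta> \<le> \<gamma> / (8 * M\<^sup>2) \<longrightarrow>
        (\<forall>z. (z \<notin> V \<longrightarrow> norm (z + \<beta> *\<^sub>R (gradh z + \<phi> z)) \<le> norm z) \<and>
             (z \<in> V \<longrightarrow> norm (z + \<beta> *\<^sub>R (gradh z + \<phi> z)) \<le>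
                (SUP v\<in>V. norm v + \<gamma> / (8 * M\<^sup>2) * norm (gradh v)) + \<gamma> * c / (8 * M\<^sup>2)))))"
proof -
  define a where "a = norm (gradh 0) + c"
  define V where "V = cball (0::real ^ 'p) (2 * a / \<gamma> + a / M)"
  define k where "k = \<gamma> / (8 * M\<^sup>2)"
  have "continuous_on V (\<lambda>v. norm v + k * norm (gradh v))"
    using lipschitz_on_continuous_on[OF assms(6)]
    by (intro continuous_intros) (auto intro: continuous_on_subset)
  then have bdd: "bdd_above ((\<lambda>v. norm v + k * norm (gradh v)) ` V)"
    unfolding V_def by (intro bounded_imp_bdd_above compact_imp_bounded compact_continuous_image) auto
  show ?thesis
    unfolding k_def[symmetric]
  proof (intro exI[of _ V] conjI allI impI)
    fix \<phi> :: "real ^ 'p \<Rightarrow> real ^ 'p" and \<beta> z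
    assume \<phi>: "\<forall>z. norm (\<phi> z) \<le> c" and \<beta>: "0 < \<beta> \<and> \<beta> \<le> k"
    show "norm (z + \<beta> *\<^sub>R (gradh z + \<phi> z)) \<le> norm z" if "z \<notin> V"
    proof (rule strongly_concave_gradient_step_norm_le[OF assms(1,2,4,5,6)])
      show "2 * (norm (gradh 0) + c) / \<gamma> + (norm (gradh 0) + c) / M \<le> norm z"
        using that by (simp add: V_def a_def)
    qed (use \<phi> \<beta> k_def in auto)
    show "norm (z + \<beta> *\<^sub>R (gradh z + \<phi> z)) \<le> (SUP v\<in>V. norm v + k * norm (gradh v)) + \<gamma> * c / (8 * M\<^sup>2)"
      if "z \<in> V"
    proof -
      have "norm (z + \<beta> *\<^sub>R (gradh z + \<phi> z)) \<le> (norm z + k * norm (gradh z)) + k * c"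
        using norm_add_scaleR_sum_le[of \<beta> k "\<phi> z" c z "gradh z"] \<phi> \<beta> by (simp add: k_def)
      also have "norm z + k * norm (gradh z) \<le> (SUP v\<in>V. norm v + k * norm (gradh v))"
        using cSUP_upper[OF that bdd] .
      finally show ?thesis
        by (simp add: k_def)
    qed
  qed (simp add: V_def)
qed

end
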